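(* Assume the Axiom of Choice. Let $X,Y$ be nonempty sets and $F\colon X^*\to Y$ a function. Suppose there exist an associative $\varepsilon$-standard operation $H\colon X^*\to X\cup\{\varepsilon\}$ and a one-to-one function $f\colon\mathrm{ran}(H^{\flat})\to Y$ such that $F^{\flat}=f\circ H^{\flat}$. Then the following are equivalent: (i) $F_1$ is one-to-one; (ii) $H_1$ is one-to-one; (iii) $H_1$ is the identity map on $X$.
   Context: $X^*=\bigcup_{n\geqslant 0}X^n$ is the set of finite tuples over $X$, $X^0=\{\varepsilon\}$ with $\varepsilon\notin X$ the empty tuple; concatenation with $\varepsilon$ leaves tuples unchanged. $F_n=F|_{X^n}$, $F^{\flat}=F|_{X^*\setminus\{\varepsilon\}}$. An operation $H\colon X^*\to X\cup\{\varepsilon\}$ is $\varepsilon$-standard if $H(\varepsilon)=\varepsilon$ and $H(\mathbf{x})=\varepsilon$ only for $\mathbf{x}=\varepsilon$. $H$ is associative if $H(\mathbf{x},\mathbf{y},\mathbf{z})=H(\mathbf{x},H(\mathbf{y}),\mathbf{z})$ for all $\mathbf{x},\mathbf{y},\mathbf{z}\in X^*$ (arguments denote concatenation; a value $\varepsilon$ is treated as the empty tuple). *)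

theory Defs
  imports Main
begin

text \<open>The
  codomain X \<union> {\<epsilon>} is modelled by 'a option, with None playing the role of \<epsilon>.\<close>

definition eps_tuple :: "'a option \<Rightarrow> 'a list" where
  "eps_tuple v = (case v of None \<Rightarrow> [] | Some x \<Rightarrow> [x])"

definition eps_standard :: "'a set \<Rightarrow> ('a list \<Rightarrow> 'a option) \<Rightarrow> bool" where
  "eps_standard X H \<longleftrightarrow> H [] = None \<and> (\<forall>xs\<in>lists X. H xs = None \<longrightarrow> xs = [])"

definition associative_op :: "'a set \<Rightarrow> ('a list \<Rightarrow> 'a option) \<Rightarrow> bool" where
  "associative_op X H \<longleftrightarrow>
     (\<forall>xs\<in>lists X. \<forall>ys\<in>lists X. \<forall>zs\<in>lists X.
        H (xs @ ys @ zs) = H (xs @ eps_tuple (H ys) @ zs))"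

definition operation_on :: "'a set \<Rightarrow> ('a list \<Rightarrow> 'a option) \<Rightarrow> bool" where
  "operation_on X H \<longleftrightarrow> (\<forall>xs\<in>lists X. H xs \<in> Some ` X \<union> {None})"

end

theory Submission
  imports Defs
begin

text \<open>Associativity with empty outer tuples gives H (H xs) = H xs, so x \<mapsto> H [x] is an
  idempotent self-map of X, and an injective idempotent map is the identity. Since f is injective on
  the range of H on nonempty tuples, x \<mapsto> F [x] = f (H [x]) is injective exactly when x \<mapsto> H [x] is.\<close>

lemma eps_standard_singleton_in_X:
  assumes "operation_on X H" and "eps_standard X H" and "x \<in> X"
  obtains y where "y \<in> X" and "H [x] = Some y"
proof -
  have "H [x] \<in> Some ` X \<union> {None}"
    using assms(1,3) unfolding operation_on_def by auto
  moreover have "H [x] \<noteq> None"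
    using assms(2,3) unfolding eps_standard_def by auto
  ultimately show thesis using that by auto
qed

lemma associative_op_idempotent:
  assumes "associative_op X H" and "xs \<in> lists X"
  shows "H (eps_tuple (H xs)) = H xs"
proof -
  have "H ([] @ xs @ []) = H ([] @ eps_tuple (H xs) @ [])"
    using assms unfolding associative_op_def by blast
  then show ?thesis by simp
qed

lemma inj_on_unary_iff_identity:
  assumes "operation_on X H" and "associative_op X H" and "eps_standard X H"
  shows "inj_on (\<lambda>x. H [x]) X \<longleftrightarrow> (\<forall>x\<in>X. H [x] = Some x)"
proof
  assume inj: "inj_on (\<lambda>x. H [x]) X"
  show "\<forall>x\<in>X. H [x] = Some x"
  proof
    fix x assume x: "x \<in> X"
    obtain y where y: "y \<in> X" "H [x] = Some y"
      using eps_standard_singleton_in_X[OF assms(1,3) x] .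
    have "H [y] = H [x]"
      using associative_op_idempotent[OF assms(2), of "[x]"] x y(2)
      by (simp add: eps_tuple_def)
    then have "y = x" using inj_onD[OF inj _ y(1) x] by simp
    with y(2) show "H [x] = Some x" by simp
  qed
next
  assume "\<forall>x\<in>X. H [x] = Some x"
  then show "inj_on (\<lambda>x. H [x]) X" by (simp add: inj_on_def)
qed

lemma inj_on_comp_iff_inj_on_image:
  assumes "inj_on f (g ` A)"
  shows "inj_on (f \<circ> g) A \<longleftrightarrow> inj_on g A"
  using assms by (blast intro: comp_inj_on inj_on_imageI2)

theorem proposition4p4:
  fixes X :: "'a set" and Y :: "'b set"
    and F :: "'a list \<Rightarrow> 'b" and H :: "'a list \<Rightarrow> 'a option" and f :: "'a option \<Rightarrow> 'b"
  assumes "X \<noteq> {}" and "Y \<noteq> {}"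
    and "\<forall>xs\<in>lists X. F xs \<in> Y"
    and "operation_on X H" and "associative_op X H" and "eps_standard X H"
    and "inj_on f (H ` (lists X - {[]}))" and "f ` H ` (lists X - {[]}) \<subseteq> Y"
    and "\<forall>xs\<in>lists X - {[]}. F xs = f (H xs)"
  shows "(inj_on (\<lambda>x. F [x]) X \<longleftrightarrow> inj_on (\<lambda>x. H [x]) X)
       \<and> (inj_on (\<lambda>x. H [x]) X \<longleftrightarrow> (\<forall>x\<in>X. H [x] = Some x))"
proof
  have "(\<lambda>x. H [x]) ` X \<subseteq> H ` (lists X - {[]})" by auto
  then have "inj_on f ((\<lambda>x. H [x]) ` X)" by (rule inj_on_subset[OF assms(7)])
  then have "inj_on (f \<circ> (\<lambda>x. H [x])) X \<longleftrightarrow> inj_on (\<lambda>x. H [x]) X"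
    by (rule inj_on_comp_iff_inj_on_image)
  moreover have "inj_on (f \<circ> (\<lambda>x. H [x])) X \<longleftrightarrow> inj_on (\<lambda>x. F [x]) X"
    using assms(9) by (intro inj_on_cong) auto
  ultimately show "inj_on (\<lambda>x. F [x]) X \<longleftrightarrow> inj_on (\<lambda>x. H [x]) X" by simp
  show "inj_on (\<lambda>x. H [x]) X \<longleftrightarrow> (\<forall>x\<in>X. H [x] = Some x)"
    using assms(4-6) by (rule inj_on_unary_iff_identity)
qed

end
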